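(* Let $\mathcal{C}=\{C_1,\dots,C_m\}$ be a random 3XOR instance with $n$ variables and $m=cn$ equations, where $c\ge 10^{10}$. Then with probability $1-o(1)$, $\mathrm{GI}(G_{\mathcal{C}},G_{\mathcal{C}^0})<1-\frac{1}{95c^2}$.
   Context: A random 3XOR instance with $n$ variables and $m$ equations: choose $m$ unordered triples of distinct variables from the $\binom{n}{3}$ possible ones (uniformly at random) and make each triple $(x_{j_1},x_{j_2},x_{j_3})$ into an equation $x_{j_1}+x_{j_2}+x_{j_3}=b$ over $\mathbb{Z}_2$ with independent uniform $b$. $\mathcal{C}^0$ is obtained by replacing every right-hand side by $0$. Graph $G_{\mathcal{C}}$: for each variable $x$, two variable vertices $x\mapsto0,x\mapsto1$ joined by an edge; for each equation $C$ on $x_1,x_2,x_3$, four constraint vertices, one per satisfying assignment $(x_1\mapsto a_1,x_2\mapsto a_2,x_3\mapsto a_3)$ of $C$, forming a clique, each adjacent to the variable vertices $x_i\mapsto a_i$; variable vertices are shared across constraints, constraint vertices are not. $\mathrm{GI}(G,H)=\max_\pi\frac{|\{e\in E(G):\pi(e)\in E(H)\}|}{\max\{|E(G)|,|E(H)|\}}$ over bijections $\pi:V(G)\to V(H)$. *)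

theory Defs
  imports "HOL-Probability.Probability"
begin

text \<open>A 3XOR instance on variables 0..n-1 is a list of equations (S, b):
  S is the (unordered) set of three distinct variables, b the right-hand side;
  the equation reads  sum of x over S = b  over Z_2.\<close>

type_synonym xor_instance = "(nat set \<times> bool) list"

definition xor_instances :: "nat \<Rightarrow> nat \<Rightarrow> xor_instance set" where
  "xor_instances n m = {cs. length cs = m \<and>
     (\<forall>e \<in> set cs. fst e \<subseteq> {..<n} \<and> card (fst e) = 3)}"

text \<open>Random instance: each of the m equations independently gets a uniformly
  random 3-subset of the variables and an independent uniform right-hand side.\<close>
definition random_3xor :: "nat \<Rightarrow> nat \<Rightarrow> xor_instance pmf" where
  "random_3xor n m = pmf_of_set (xor_instances n m)"

definition homogenize :: "xor_instance \<Rightarrow> xor_instance" where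
  "homogenize cs = map (\<lambda>(S, b). (S, False)) cs"

definition sat_assign :: "nat set \<times> bool \<Rightarrow> (nat \<Rightarrow> bool) \<Rightarrow> bool" where
  "sat_assign C f \<longleftrightarrow> (\<forall>x. x \<notin> fst C \<longrightarrow> \<not> f x) \<and>
      odd (card {x \<in> fst C. f x}) = snd C"

datatype vtx = VarV nat bool | ConV nat "nat \<Rightarrow> bool"

definition graph_V :: "nat \<Rightarrow> xor_instance \<Rightarrow> vtx set" where
  "graph_V n cs = {VarV x a | x a. x < n} \<union>
     {ConV j f | j f. j < length cs \<and> sat_assign (cs ! j) f}"

definition graph_E :: "nat \<Rightarrow> xor_instance \<Rightarrow> vtx set set" where
  "graph_E n cs =
     {{VarV x False, VarV x True} | x. x < n} \<union>
     {{ConV j f, ConV j g} | j f g. j < length cs \<and> sat_assign (cs ! j) f \<and>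
         sat_assign (cs ! j) g \<and> f \<noteq> g} \<union>
     {{ConV j f, VarV x (f x)} | j f x. j < length cs \<and> sat_assign (cs ! j) f \<and>
         x \<in> fst (cs ! j)}"

definition GI :: "'a set \<Rightarrow> 'a set set \<Rightarrow> 'b set \<Rightarrow> 'b set set \<Rightarrow> real" where
  "GI V E W F = Max ((\<lambda>\<pi>. real (card {e \<in> E. \<pi> ` e \<in> F}) / real (max (card E) (card F)))
                      ` {\<pi>. bij_betw \<pi> V W})"

end

theory Submission
  imports Defs
begin

text \<open>
  Every 4-clique of \<open>G\<^sub>C\<close> lies inside the clique of a single equation. Hence a bijection \<open>\<pi>\<close>
  that preserves all edges at the clique of an equation \<open>C\<close> maps it onto the clique of an equation
  of \<open>C\<^sup>0\<close>, and the three variable pairs of \<open>C\<close> onto those of that equation, each possibly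
  swapped. Reading off the assignment "\<open>x\<close> is true iff \<open>\<pi>\<close> swaps the pair of \<open>x\<close>", the
  homogeneity of the image forces this assignment to satisfy \<open>C\<close>. So every equation it violates
  costs \<open>\<pi>\<close> an edge at its own clique, and as \<open>G\<^sub>C\<close> has at most \<open>n + 28m\<close> edges, a score
  above \<open>1 - 1/116\<close> yields an assignment violating at most \<open>m/4\<close> equations. For \<open>m \<ge> 8n\<close> a
  union bound over the \<open>2\<^sup>n\<close> assignments and the sets of at most \<open>m/4\<close> equations shows that
  such an assignment exists with probability at most \<open>(2 (25/32)\<^sup>4)\<^sup>n\<close>. The gap obtained is the
  constant \<open>1/116\<close> (for \<open>c \<ge> 8\<close>), which is better than \<open>1/(95c\<^sup>2)\<close>.
\<close>

section \<open>Satisfying assignments of a 3XOR equation\<close>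

lemma parity_card_three:
  assumes "x \<noteq> y" "y \<noteq> z" "x \<noteq> z"
  shows "odd (card {v \<in> {x,y,z}. g v}) = ((g x \<noteq> g y) \<noteq> g z)"
proof -
  have split: "{v \<in> {x,y,z}. g v} =
      (if g x then {x} else {}) \<union> (if g y then {y} else {}) \<union> (if g z then {z} else {})"
    by auto
  show ?thesis
    unfolding split using assms by (cases "g x"; cases "g y"; cases "g z") (auto simp: card_insert_if)
qed

lemma card_3_obtain_third:
  assumes "card S = 3" "x \<in> S" "y \<in> S" "x \<noteq> y"
  obtains z where "S = {x,y,z}" "z \<noteq> x" "z \<noteq> y"
proof -
  have "finite S" using assms(1) by (metis card.infinite zero_neq_numeral)
  then have "card (S - {x,y}) = 1" using assms by (simp add: card_Diff_subset)
  then obtain z where "S - {x,y} = {z}" by (auto simp: card_Suc_eq)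
  then show ?thesis using that assms by auto
qed

lemma sat_assign_outside: "sat_assign C f \<Longrightarrow> v \<notin> fst C \<Longrightarrow> \<not> f v"
  unfolding sat_assign_def by auto

lemma sat_assign_parity:
  assumes "sat_assign C f" "fst C = {x,y,z}" "x \<noteq> y" "y \<noteq> z" "x \<noteq> z"
  shows "snd C = ((f x \<noteq> f y) \<noteq> f z)"
  using assms parity_card_three[of x y z f] unfolding sat_assign_def by simp

lemma sat_assign_eqI:
  assumes "card (fst C) = 3" "sat_assign C f" "sat_assign C g"
    and "x \<in> fst C" "y \<in> fst C" "x \<noteq> y" "f x = g x" "f y = g y"
  shows "f = g"
proof
  obtain z where z: "fst C = {x,y,z}" "z \<noteq> x" "z \<noteq> y"
    using card_3_obtain_third assms(1,4-6) .
  then have "f z = g z"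
    using sat_assign_parity[OF assms(2) z(1)] sat_assign_parity[OF assms(3) z(1)] assms by auto
  then show "f v = g v" for v
    using sat_assign_outside[OF assms(2), of v] sat_assign_outside[OF assms(3), of v] z assms(7,8)
    by (cases "v \<in> fst C") auto
qed

lemma sat_assign_coordinates:
  assumes "card (fst C) = 3" "x \<in> fst C" "y \<in> fst C" "x \<noteq> y"
  obtains F where "\<And>a b. sat_assign C (F a b)" "\<And>a b. F a b x = a" "\<And>a b. F a b y = b"
    "\<And>f. sat_assign C f \<Longrightarrow> F (f x) (f y) = f"
proof -
  obtain z where z: "fst C = {x,y,z}" "z \<noteq> x" "z \<noteq> y"
    using card_3_obtain_third assms .
  define F where "F a b = (\<lambda>v. if v = x then a else if v = y then b
      else if v = z then (snd C \<noteq> a) \<noteq> b else False)" for a b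
  have sat: "sat_assign C (F a b)" for a b
  proof -
    have "odd (card {v \<in> {x,y,z}. F a b v}) = snd C"
      using parity_card_three[of x y z "F a b"] z assms(4) by (auto simp: F_def)
    then show ?thesis using z unfolding sat_assign_def by (auto simp: F_def)
  qed
  have Fx: "F a b x = a" and Fy: "F a b y = b" for a b
    using assms(4) by (simp_all add: F_def)
  have "F (f x) (f y) = f" if "sat_assign C f" for f
    by (rule sat_assign_eqI[OF assms(1) sat that assms(2-4)]) (simp_all add: Fx Fy)
  then show ?thesis using that sat Fx Fy by blast
qed

lemma ex_sat_assign:
  assumes "card (fst C) = 3"
  shows "\<exists>f. sat_assign C f"
proof -
  obtain x y z where xyz: "fst C = {x,y,z}" "x \<noteq> y"
    using assms by (auto simp: card_3_iff)
  obtain F where "\<And>a b. sat_assign C (F a b)"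
    by (rule sat_assign_coordinates[OF assms, of x y]) (use xyz in auto)
  then show ?thesis by blast
qed

lemma card_sat_assign_le:
  assumes "card (fst C) = 3"
  shows "finite {f. sat_assign C f}" "card {f. sat_assign C f} \<le> 4"
proof -
  obtain x y z where xyz: "fst C = {x,y,z}" "x \<noteq> y"
    using assms by (auto simp: card_3_iff)
  obtain F where F: "\<And>a b. sat_assign C (F a b)" "\<And>f. sat_assign C f \<Longrightarrow> F (f x) (f y) = f"
    by (rule sat_assign_coordinates[OF assms, of x y]) (use xyz in auto)
  have eq: "{f. sat_assign C f} = case_prod F ` UNIV"
    using F by (auto simp: image_iff) metis
  show "finite {f. sat_assign C f}" unfolding eq by simp
  have "card (case_prod F ` (UNIV :: (bool \<times> bool) set)) \<le> 4"
    using card_image_le[of "UNIV :: (bool \<times> bool) set" "case_prod F"]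
    by simp
  then show "card {f. sat_assign C f} \<le> 4" unfolding eq .
qed

lemma sat_assign_no_three_agree:
  assumes "card (fst C) = 3" "sat_assign C f" "sat_assign C g" "sat_assign C h"
    and "f \<noteq> g" "f \<noteq> h" "g \<noteq> h" "x \<in> fst C" "f x = g x" "g x = h x"
  shows False
proof -
  obtain y where y: "y \<in> fst C" "y \<noteq> x"
    using assms(1,8) by (metis card_3_iff insertCI)
  have "f y = g y \<or> f y = h y \<or> g y = h y" by auto
  then show False
    using sat_assign_eqI[OF assms(1) _ _ assms(8) y(1) y(2)[symmetric]] assms by metis
qed

section \<open>Rigidity of the constraint graph\<close>

definition well_formed :: "xor_instance \<Rightarrow> bool" where
  "well_formed cs \<longleftrightarrow> (\<forall>j<length cs. card (fst (cs ! j)) = 3)"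

lemma VarV_VarV_edge_iff:
  "{VarV x a, VarV y b} \<in> graph_E n cs \<longleftrightarrow> x = y \<and> a \<noteq> b \<and> x < n"
  unfolding graph_E_def by (auto simp: doubleton_eq_iff)

lemma ConV_VarV_edge_iff:
  "{ConV j f, VarV x a} \<in> graph_E n cs \<longleftrightarrow>
     j < length cs \<and> sat_assign (cs ! j) f \<and> x \<in> fst (cs ! j) \<and> a = f x"
  unfolding graph_E_def by (auto simp: doubleton_eq_iff)

lemma VarV_ConV_edge_iff:
  "{VarV x a, ConV j f} \<in> graph_E n cs \<longleftrightarrow>
     j < length cs \<and> sat_assign (cs ! j) f \<and> x \<in> fst (cs ! j) \<and> a = f x"
  by (simp add: insert_commute ConV_VarV_edge_iff)

lemma ConV_ConV_edge_iff:
  "{ConV j f, ConV k g} \<in> graph_E n cs \<longleftrightarrow>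
     j = k \<and> j < length cs \<and> sat_assign (cs ! j) f \<and> sat_assign (cs ! j) g \<and> f \<noteq> g"
  unfolding graph_E_def by (auto simp: doubleton_eq_iff)

lemma singleton_not_in_graph_E: "{v} \<notin> graph_E n cs"
  unfolding graph_E_def by (auto simp: doubleton_eq_iff)

lemmas graph_E_edge_iffs = VarV_VarV_edge_iff ConV_VarV_edge_iff VarV_ConV_edge_iff
  ConV_ConV_edge_iff singleton_not_in_graph_E

lemma edge_ConV_same_constraint:
  "e \<in> graph_E n cs \<Longrightarrow> ConV j f \<in> e \<Longrightarrow> ConV k g \<in> e \<Longrightarrow> j = k"
  unfolding graph_E_def by auto

lemma VarV_not_in_4_clique:
  assumes "well_formed cs"
    and "{VarV x a, u} \<in> graph_E n cs" "{VarV x a, v} \<in> graph_E n cs" "{VarV x a, w} \<in> graph_E n cs"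
    and "{u, v} \<in> graph_E n cs" "{u, w} \<in> graph_E n cs" "{v, w} \<in> graph_E n cs"
  shows False
proof (cases "\<exists>j f g h. u = ConV j f \<and> v = ConV j g \<and> w = ConV j h")
  case True
  then obtain j f g h where "u = ConV j f" "v = ConV j g" "w = ConV j h" by blast
  then have "j < length cs" "sat_assign (cs ! j) f" "sat_assign (cs ! j) g" "sat_assign (cs ! j) h"
    "f \<noteq> g" "f \<noteq> h" "g \<noteq> h" "x \<in> fst (cs ! j)" "f x = g x" "g x = h x"
    using assms by (auto simp: graph_E_edge_iffs)
  moreover have "card (fst (cs ! j)) = 3"
    using assms(1) \<open>j < length cs\<close> by (simp add: well_formed_def)
  ultimately show False using sat_assign_no_three_agree by metis
next
  case False
  then show False using assms(2-)
    by (cases u; cases v; cases w) (auto simp: graph_E_edge_iffs)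
qed

lemma clique_4_in_constraint:
  assumes "well_formed cs"
    and "{t, u} \<in> graph_E n cs" "{t, v} \<in> graph_E n cs" "{t, w} \<in> graph_E n cs"
    and "{u, v} \<in> graph_E n cs" "{u, w} \<in> graph_E n cs" "{v, w} \<in> graph_E n cs"
  shows "\<exists>k f g h i. t = ConV k f \<and> u = ConV k g \<and> v = ConV k h \<and> w = ConV k i"
proof -
  have sym: "{p, q} = {q, p}" for p q :: vtx by auto
  have "\<not> (\<exists>x a. p = VarV x a)" if "p \<in> {t, u, v, w}" for p
    using that VarV_not_in_4_clique[OF assms(1)] assms(2-) sym by auto metis+
  then obtain j1 f1 j2 f2 j3 f3 j4 f4 where
    "t = ConV j1 f1" "u = ConV j2 f2" "v = ConV j3 f3" "w = ConV j4 f4"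
    by (metis insertCI vtx.exhaust)
  then show ?thesis using assms(2-) by (auto simp: ConV_ConV_edge_iff)
qed

lemma constraint_clique_image:
  fixes \<pi> :: "vtx \<Rightarrow> vtx"
  assumes wf': "well_formed cs'" and j: "j < length cs" "card (fst (cs ! j)) = 3"
    and inj: "inj_on \<pi> (graph_V n cs)"
    and pres: "\<And>f g. sat_assign (cs ! j) f \<Longrightarrow> sat_assign (cs ! j) g \<Longrightarrow> f \<noteq> g \<Longrightarrow>
      {\<pi> (ConV j f), \<pi> (ConV j g)} \<in> graph_E n' cs'"
  obtains k G where "k < length cs'" "\<And>f. sat_assign (cs ! j) f \<Longrightarrow> \<pi> (ConV j f) = ConV k (G f)"
    "\<And>f. sat_assign (cs ! j) f \<Longrightarrow> sat_assign (cs' ! k) (G f)"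
    "inj_on G {f. sat_assign (cs ! j) f}"
proof -
  let ?C = "cs ! j"
  obtain x y z where xyz: "fst ?C = {x,y,z}" "x \<noteq> y"
    using j(2) by (auto simp: card_3_iff)
  obtain F where F: "\<And>a b. sat_assign ?C (F a b)" "\<And>a b. F a b x = a" "\<And>a b. F a b y = b"
    "\<And>f. sat_assign ?C f \<Longrightarrow> F (f x) (f y) = f"
    by (rule sat_assign_coordinates[OF j(2), of x y]) (use xyz in auto)
  have F_ne: "F a b \<noteq> F a' b'" if "(a, b) \<noteq> (a', b')" for a b a' b'
    using that F(2)[of a b] F(2)[of a' b'] F(3)[of a b] F(3)[of a' b'] by auto
  have "\<exists>k g1 g2 g3 g4. \<pi> (ConV j (F False False)) = ConV k g1 \<and> \<pi> (ConV j (F False True)) = ConV k g2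
      \<and> \<pi> (ConV j (F True False)) = ConV k g3 \<and> \<pi> (ConV j (F True True)) = ConV k g4"
    by (rule clique_4_in_constraint[where n = n', OF wf']) (rule pres[OF F(1) F(1) F_ne]; simp)+
  then obtain k where "\<exists>g. \<pi> (ConV j (F a b)) = ConV k g" for a b
    by (metis (full_types))
  then have "\<exists>g. \<pi> (ConV j f) = ConV k g" if "sat_assign ?C f" for f
    using F(4)[OF that] by metis
  then obtain G where G: "\<And>f. sat_assign ?C f \<Longrightarrow> \<pi> (ConV j f) = ConV k (G f)"
    by metis
  have edge: "k < length cs' \<and> sat_assign (cs' ! k) (G f)" if f: "sat_assign ?C f" for f
  proof -
    have ne: "f \<noteq> F (\<not> f x) (f y)" using F(2) by metis
    show ?thesis
      using pres[OF f F(1) ne] G[OF f] G[OF F(1)] by (simp add: ConV_ConV_edge_iff)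
  qed
  have "inj_on G {f. sat_assign ?C f}"
  proof (rule inj_onI)
    fix f g assume fg: "f \<in> {f. sat_assign ?C f}" "g \<in> {f. sat_assign ?C f}" "G f = G g"
    then have "\<pi> (ConV j f) = \<pi> (ConV j g)" using G by simp
    moreover have "ConV j f \<in> graph_V n cs" "ConV j g \<in> graph_V n cs"
      using fg j(1) unfolding graph_V_def by auto
    ultimately show "f = g" using inj_onD[OF inj] by blast
  qed
  then show ?thesis using that edge F(1) G by blast
qed

lemma constraint_variable_image:
  fixes \<pi> :: "vtx \<Rightarrow> vtx" and G :: "(nat \<Rightarrow> bool) \<Rightarrow> nat \<Rightarrow> bool"
  assumes wf': "well_formed cs'" and k: "k < length cs'"
    and C: "card (fst C) = 3" "x \<in> fst C"
    and G: "\<And>f. sat_assign C f \<Longrightarrow> sat_assign (cs' ! k) (G f)" "inj_on G {f. sat_assign C f}"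
    and edge: "\<And>f. sat_assign C f \<Longrightarrow> {ConV k (G f), \<pi> (VarV x (f x))} \<in> graph_E n' cs'"
    and off_clique: "\<And>f a. sat_assign C f \<Longrightarrow> \<pi> (VarV x a) \<noteq> ConV k (G f)"
  obtains y b where "y \<in> fst (cs' ! k)" "\<And>a. \<pi> (VarV x a) = VarV y (a \<noteq> b)"
    "\<And>f. sat_assign C f \<Longrightarrow> G f y = (f x \<noteq> b)"
proof -
  let ?D = "cs' ! k"
  have D: "card (fst ?D) = 3" using wf' k by (simp add: well_formed_def)
  obtain z where z: "z \<in> fst C" "x \<noteq> z" using C by (metis card_3_iff insertCI)
  obtain F where F: "\<And>a b. sat_assign C (F a b)" "\<And>a b. F a b x = a" "\<And>a b. F a b z = b"
    "\<And>f. sat_assign C f \<Longrightarrow> F (f x) (f z) = f"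
    using sat_assign_coordinates[OF C z] by blast
  have GF: "sat_assign ?D (G (F a b))" for a b using G(1) F(1) by blast
  have GF_ne: "G (F a b) \<noteq> G (F a' b')" if "(a, b) \<noteq> (a', b')" for a b a' b'
  proof
    assume "G (F a b) = G (F a' b')"
    then have "F a b = F a' b'" using inj_onD[OF G(2)] F(1) by blast
    then show False using that F(2)[of a b] F(2)[of a' b'] F(3)[of a b] F(3)[of a' b'] by auto
  qed
  have to_var: "\<exists>y c. y \<in> fst ?D \<and> \<pi> (VarV x a) = VarV y c \<and> G (F a False) y = c \<and> G (F a True) y = c"
    for a
  proof (cases "\<pi> (VarV x a)")
    case (VarV y c)
    then show ?thesis using edge[OF F(1), of a False] edge[OF F(1), of a True] F(2)
      by (auto simp: ConV_VarV_edge_iff)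
  next
    case (ConV k' h)
    \<comment> \<open>then \<open>h\<close> would be a fifth satisfying assignment of the target equation\<close>
    have h: "k' = k" "sat_assign ?D h" "h \<noteq> G (F a False)" "h \<noteq> G (F a True)"
      using edge[OF F(1), of a False] edge[OF F(1), of a True] F(2) ConV
      by (auto simp: ConV_ConV_edge_iff)
    have "h \<noteq> G (F (\<not> a) b)" for b using off_clique[OF F(1), of a "\<not> a" b] ConV h by auto
    then have "card {h, G (F a False), G (F a True), G (F (\<not> a) False), G (F (\<not> a) True)} = 5"
      using h GF_ne by auto
    moreover have "card {h, G (F a False), G (F a True), G (F (\<not> a) False), G (F (\<not> a) True)}
        \<le> card {g. sat_assign ?D g}"
      by (rule card_mono) (use card_sat_assign_le[OF D] h GF in auto)
    ultimately show ?thesis using card_sat_assign_le[OF D] by simp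
  qed
  obtain y c where y: "y \<in> fst ?D" "\<pi> (VarV x False) = VarV y c"
    "G (F False False) y = c" "G (F False True) y = c"
    using to_var[of False] by blast
  obtain y' c' where y': "y' \<in> fst ?D" "\<pi> (VarV x True) = VarV y' c'"
    "G (F True False) y' = c'" "G (F True True) y' = c'"
    using to_var[of True] by blast
  have flip: "G (F True b) y \<noteq> c" for b
    using sat_assign_no_three_agree[OF D GF GF GF, of False False False True True b] y GF_ne by auto
  have "y' = y"
  proof (rule ccontr)
    assume "y' \<noteq> y"
    then have "G (F True False) = G (F True True)"
      using sat_assign_eqI[OF D GF GF y'(1) y(1)] y' flip by auto
    then show False using GF_ne by auto
  qed
  then have "c' = (\<not> c)" using flip[of False] y' by auto
  then have "\<pi> (VarV x a) = VarV y (a \<noteq> c)" for a using y y' \<open>y' = y\<close> by (cases a) auto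
  moreover have "G f y = (f x \<noteq> c)" if "sat_assign C f" for f
    using F(4)[OF that] y y' \<open>y' = y\<close> \<open>c' = (\<not> c)\<close> by (cases "f x"; cases "f z") force+
  ultimately show ?thesis using that y(1) by blast
qed

lemma preserved_constraint_parity:
  fixes \<pi> :: "vtx \<Rightarrow> vtx"
  assumes wf': "well_formed cs'" and hom: "\<forall>k<length cs'. \<not> snd (cs' ! k)"
    and j: "j < length cs" "card (fst (cs ! j)) = 3" "fst (cs ! j) \<subseteq> {..<n}"
    and inj: "inj_on \<pi> (graph_V n cs)"
    and pres: "\<And>e. e \<in> graph_E n cs \<Longrightarrow> (\<exists>f. ConV j f \<in> e) \<Longrightarrow> \<pi> ` e \<in> graph_E n' cs'"
  shows "odd (card {x \<in> fst (cs ! j). \<exists>y. \<pi> (VarV x False) = VarV y True}) = snd (cs ! j)"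
proof -
  let ?C = "cs ! j"
  have ConV_in_V: "ConV j f \<in> graph_V n cs" if "sat_assign ?C f" for f
    using that j unfolding graph_V_def by auto
  have VarV_in_V: "VarV x a \<in> graph_V n cs" if "x \<in> fst ?C" for x a
    using that j unfolding graph_V_def by auto
  have clique_edge: "{\<pi> (ConV j f), \<pi> (ConV j g)} \<in> graph_E n' cs'"
    if "sat_assign ?C f" "sat_assign ?C g" "f \<noteq> g" for f g
    using that pres[of "{ConV j f, ConV j g}"] j(1) by (auto simp: ConV_ConV_edge_iff)
  obtain k G where k: "k < length cs'" "\<And>f. sat_assign ?C f \<Longrightarrow> \<pi> (ConV j f) = ConV k (G f)"
    "\<And>f. sat_assign ?C f \<Longrightarrow> sat_assign (cs' ! k) (G f)" "inj_on G {f. sat_assign ?C f}"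
    using constraint_clique_image[OF wf' j(1,2) inj clique_edge] by blast
  let ?D = "cs' ! k"
  have "\<exists>y b. y \<in> fst ?D \<and> (\<forall>a. \<pi> (VarV x a) = VarV y (a \<noteq> b))
      \<and> (\<forall>f. sat_assign ?C f \<longrightarrow> G f y = (f x \<noteq> b))" if x: "x \<in> fst ?C" for x
  proof -
    have edge: "{ConV k (G f), \<pi> (VarV x (f x))} \<in> graph_E n' cs'" if f: "sat_assign ?C f" for f
      using pres[of "{ConV j f, VarV x (f x)}"] j(1) f x k(2)[OF f]
      by (auto simp: ConV_VarV_edge_iff)
    have off_clique: "\<pi> (VarV x a) \<noteq> ConV k (G f)" if f: "sat_assign ?C f" for f a
      using inj_onD[OF inj _ VarV_in_V[OF x] ConV_in_V[OF f]] k(2)[OF f] by auto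
    obtain y b where "y \<in> fst ?D" "\<And>a. \<pi> (VarV x a) = VarV y (a \<noteq> b)"
      "\<And>f. sat_assign ?C f \<Longrightarrow> G f y = (f x \<noteq> b)"
      using constraint_variable_image[OF wf' k(1) j(2) x k(3,4) edge off_clique] by blast
    then show ?thesis by blast
  qed
  then obtain Y B where YB: "\<And>x. x \<in> fst ?C \<Longrightarrow> Y x \<in> fst ?D"
    "\<And>x a. x \<in> fst ?C \<Longrightarrow> \<pi> (VarV x a) = VarV (Y x) (a \<noteq> B x)"
    "\<And>x f. x \<in> fst ?C \<Longrightarrow> sat_assign ?C f \<Longrightarrow> G f (Y x) = (f x \<noteq> B x)"
    by metis
  have Y_inj: "Y x \<noteq> Y x'" if "x \<in> fst ?C" "x' \<in> fst ?C" "x \<noteq> x'" for x x'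
  proof
    assume "Y x = Y x'"
    then have "\<pi> (VarV x (B x)) = \<pi> (VarV x' (B x'))" using YB(2) that by simp
    then show False using inj_onD[OF inj] VarV_in_V that by blast
  qed
  obtain x1 x2 x3 where X: "fst ?C = {x1,x2,x3}" "x1 \<noteq> x2" "x2 \<noteq> x3" "x1 \<noteq> x3"
    using j(2) by (auto simp: card_3_iff)
  have D: "fst ?D = {Y x1, Y x2, Y x3}"
  proof (rule sym, rule card_subset_eq)
    show "finite (fst ?D)" using wf' k(1) unfolding well_formed_def by (metis card.infinite zero_neq_numeral)
    show "{Y x1, Y x2, Y x3} \<subseteq> fst ?D" using YB(1) X by auto
    show "card {Y x1, Y x2, Y x3} = card (fst ?D)"
      using Y_inj X wf' k(1) by (simp add: well_formed_def)
  qed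
  obtain f where f: "sat_assign ?C f"
    using ex_sat_assign[OF j(2)] by blast
  have "\<not> snd ?D" using hom k(1) by simp
  then have "snd ?C = ((B x1 \<noteq> B x2) \<noteq> B x3)"
    using sat_assign_parity[OF k(3)[OF f] D] sat_assign_parity[OF f X] Y_inj X YB(3)[OF _ f]
    by auto
  moreover have "(\<exists>y. \<pi> (VarV x False) = VarV y True) = B x" if "x \<in> fst ?C" for x
    using YB(2)[OF that, of False] by auto
  ultimately show ?thesis
    using parity_card_three[OF X(2-4), of "\<lambda>x. \<exists>y. \<pi> (VarV x False) = VarV y True"] X by simp
qed

lemma finite_graph_E_card_le:
  assumes "well_formed cs"
  shows "finite (graph_E n cs)" "card (graph_E n cs) \<le> n + 28 * length cs"
proof -
  let ?L = "length cs"
  define S where "S j = {f. sat_assign (cs ! j) f}" for j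
  have S: "finite (S j)" "card (S j) \<le> 4" if "j < ?L" for j
    using card_sat_assign_le[of "cs ! j"] assms that unfolding well_formed_def S_def by auto
  have X: "finite (fst (cs ! j))" "card (fst (cs ! j)) = 3" if "j < ?L" for j
    using assms that unfolding well_formed_def by (metis card.infinite zero_neq_numeral)+
  define I2 where "I2 = (SIGMA j:{..<?L}. S j \<times> S j)"
  define I3 where "I3 = (SIGMA j:{..<?L}. S j \<times> fst (cs ! j))"
  define E1 where "E1 = (\<lambda>x. {VarV x False, VarV x True}) ` {..<n}"
  define E2 where "E2 = (\<lambda>(j, f, g). {ConV j f, ConV j g}) ` I2"
  define E3 where "E3 = (\<lambda>(j, f, x). {ConV j f, VarV x (f x)}) ` I3"
  have sub: "graph_E n cs \<subseteq> E1 \<union> E2 \<union> E3"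
    unfolding graph_E_def E1_def E2_def E3_def I2_def I3_def S_def by fastforce
  have "card I2 = (\<Sum>j<?L. card (S j) * card (S j))"
    unfolding I2_def using S(1) by (simp add: card_cartesian_product)
  also have "\<dots> \<le> (\<Sum>j<?L. 4 * 4)" using S(2) by (intro sum_mono mult_le_mono) auto
  finally have I2_le: "card I2 \<le> 16 * ?L" by simp
  have "card I3 = (\<Sum>j<?L. card (S j) * card (fst (cs ! j)))"
    unfolding I3_def using S(1) X(1) by (simp add: card_cartesian_product)
  also have "\<dots> \<le> (\<Sum>j<?L. 4 * 3)" using S(2) X(2) by (intro sum_mono mult_le_mono) auto
  finally have I3_le: "card I3 \<le> 12 * ?L" by simp
  have fin_I: "finite I2" "finite I3"
    unfolding I2_def I3_def using S(1) X(1) by (auto intro!: finite_SigmaI finite_cartesian_product)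
  then have fin: "finite (E1 \<union> E2 \<union> E3)" unfolding E1_def E2_def E3_def by blast
  then show "finite (graph_E n cs)" using sub finite_subset by blast
  have "card (graph_E n cs) \<le> card E1 + card E2 + card E3"
    using card_mono[OF fin sub] card_Un_le[of "E1 \<union> E2" E3] card_Un_le[of E1 E2] by linarith
  moreover have "card E1 \<le> n" "card E2 \<le> card I2" "card E3 \<le> card I3"
    unfolding E1_def E2_def E3_def using fin_I by (auto intro: card_image_le[THEN order_trans])
  ultimately show "card (graph_E n cs) \<le> n + 28 * ?L" using I2_le I3_le by linarith
qed

lemma homogenize_nth: "j < length cs \<Longrightarrow> homogenize cs ! j = (fst (cs ! j), False)"
  unfolding homogenize_def by (auto simp: case_prod_beta)

lemma length_homogenize [simp]: "length (homogenize cs) = length cs"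
  unfolding homogenize_def by simp

lemma well_formed_homogenize: "well_formed cs \<Longrightarrow> well_formed (homogenize cs)"
  unfolding well_formed_def by (simp add: homogenize_nth)

definition violated :: "nat set \<Rightarrow> xor_instance \<Rightarrow> nat set" where
  "violated A cs = {j. j < length cs \<and> odd (card (fst (cs ! j) \<inter> A)) \<noteq> snd (cs ! j)}"

text \<open>Read the assignment off \<open>\<pi>\<close> as the set of variables whose \<open>0\<close>-vertex is sent to a
  \<open>1\<close>-vertex. Every equation it violates must break an edge at that equation's clique, and
  distinct cliques share no edge.\<close>

lemma card_violated_le_broken_edges:
  fixes \<pi> :: "vtx \<Rightarrow> vtx"
  assumes wf: "well_formed cs" and vars: "\<forall>j<length cs. fst (cs ! j) \<subseteq> {..<n}"
    and inj: "inj_on \<pi> (graph_V n cs)"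
  shows "card (violated {x. x < n \<and> (\<exists>y. \<pi> (VarV x False) = VarV y True)} cs)
    \<le> card {e \<in> graph_E n cs. \<pi> ` e \<notin> graph_E n (homogenize cs)}"
proof -
  define A where "A = {x. x < n \<and> (\<exists>y. \<pi> (VarV x False) = VarV y True)}"
  define B where "B = {e \<in> graph_E n cs. \<pi> ` e \<notin> graph_E n (homogenize cs)}"
  have "\<exists>e \<in> B. \<exists>f. ConV j f \<in> e" if j: "j \<in> violated A cs" for j
  proof (rule ccontr)
    assume "\<not> ?thesis"
    then have pres: "\<And>e. e \<in> graph_E n cs \<Longrightarrow> (\<exists>f. ConV j f \<in> e) \<Longrightarrow>
        \<pi> ` e \<in> graph_E n (homogenize cs)"
      unfolding B_def by blast
    have jl: "j < length cs" using j unfolding violated_def by simp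
    have "odd (card {x \<in> fst (cs ! j). \<exists>y. \<pi> (VarV x False) = VarV y True}) = snd (cs ! j)"
      using wf jl vars unfolding well_formed_def
      by (intro preserved_constraint_parity[OF well_formed_homogenize[OF wf] _ jl _ _ inj pres])
        (auto simp: homogenize_nth)
    moreover have "{x \<in> fst (cs ! j). \<exists>y. \<pi> (VarV x False) = VarV y True} = fst (cs ! j) \<inter> A"
      using vars jl unfolding A_def by auto
    ultimately show False using j unfolding violated_def by simp
  qed
  then obtain h where h: "\<And>j. j \<in> violated A cs \<Longrightarrow> h j \<in> B \<and> (\<exists>f. ConV j f \<in> h j)"
    by metis
  have "inj_on h (violated A cs)"
    by (rule inj_onI) (use h edge_ConV_same_constraint in \<open>force simp: B_def\<close>)
  moreover have "finite B" unfolding B_def using finite_graph_E_card_le(1)[OF wf] by simp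
  ultimately have "card (violated A cs) \<le> card B"
    using h by (intro card_inj_on_le) auto
  then show ?thesis unfolding A_def B_def .
qed

lemma sat_assign_flip:
  assumes "finite S" "x \<in> S"
  shows "sat_assign (S, b) (f(x := \<not> f x)) \<longleftrightarrow> sat_assign (S, \<not> b) f"
proof -
  have fin: "finite {v \<in> S. f v}" using assms by auto
  have "{v \<in> S. (f(x := \<not> f x)) v} = (if f x then {v \<in> S. f v} - {x} else insert x {v \<in> S. f v})"
    using assms by auto
  then have "odd (card {v \<in> S. (f(x := \<not> f x)) v}) \<longleftrightarrow> \<not> odd (card {v \<in> S. f v})"
    using fin assms by (cases "f x") (auto simp: card_Diff_singleton card_gt_0_iff)
  moreover have "(\<forall>v. v \<notin> S \<longrightarrow> \<not> (f(x := \<not> f x)) v) \<longleftrightarrow> (\<forall>v. v \<notin> S \<longrightarrow> \<not> f v)"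
    using assms by auto
  ultimately show ?thesis unfolding sat_assign_def by auto
qed

text \<open>The bijection below is only needed to see that the maximum defining \<open>GI\<close> ranges over
  a nonempty set.\<close>

definition flip_min :: "nat set \<times> bool \<Rightarrow> (nat \<Rightarrow> bool) \<Rightarrow> nat \<Rightarrow> bool" where
  "flip_min C f = (if snd C then f(Min (fst C) := \<not> f (Min (fst C))) else f)"

definition homogenize_vtx :: "xor_instance \<Rightarrow> vtx \<Rightarrow> vtx" where
  "homogenize_vtx cs v = (case v of VarV x a \<Rightarrow> VarV x a | ConV j f \<Rightarrow> ConV j (flip_min (cs ! j) f))"

lemma flip_min_involution [simp]: "flip_min C (flip_min C f) = f"
  by (auto simp: flip_min_def)

lemma homogenize_vtx_involution: "homogenize_vtx cs (homogenize_vtx cs v) = v"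
  by (cases v) (auto simp: homogenize_vtx_def)

lemma sat_assign_flip_min:
  assumes "card (fst C) = 3"
  shows "sat_assign (fst C, False) (flip_min C f) \<longleftrightarrow> sat_assign C f"
proof -
  have "finite (fst C)" "fst C \<noteq> {}" using assms by (auto intro: card_ge_0_finite)
  then show ?thesis
    using sat_assign_flip[of "fst C" "Min (fst C)" False f]
    by (cases C) (auto simp: flip_min_def)
qed

lemma bij_betw_homogenize_vtx:
  assumes "well_formed cs"
  shows "bij_betw (homogenize_vtx cs) (graph_V n cs) (graph_V n (homogenize cs))"
proof (rule bij_betw_byWitness[where f' = "homogenize_vtx cs"])
  have sat_iff: "sat_assign (homogenize cs ! j) (flip_min (cs ! j) f) \<longleftrightarrow> sat_assign (cs ! j) f"
    if "j < length cs" for j f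
    using sat_assign_flip_min[of "cs ! j" f] assms that
    by (simp add: homogenize_nth well_formed_def)
  have sat_iff': "sat_assign (homogenize cs ! j) g \<longleftrightarrow> sat_assign (cs ! j) (flip_min (cs ! j) g)"
    if "j < length cs" for j g
    using sat_iff[OF that, of "flip_min (cs ! j) g"] by simp
  show "homogenize_vtx cs ` graph_V n cs \<subseteq> graph_V n (homogenize cs)"
    unfolding graph_V_def homogenize_vtx_def using sat_iff by auto
  show "homogenize_vtx cs ` graph_V n (homogenize cs) \<subseteq> graph_V n cs"
    unfolding graph_V_def homogenize_vtx_def using sat_iff' by auto
qed (simp_all add: homogenize_vtx_involution)

lemma GI_lessI:
  assumes ex: "\<exists>\<pi>. bij_betw \<pi> V W" and fin: "finite E"
    and less: "\<And>\<pi>. bij_betw \<pi> V W \<Longrightarrow>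
      real (card {e \<in> E. \<pi> ` e \<in> F}) / real (max (card E) (card F)) < t"
  shows "GI V E W F < t"
proof -
  define score where
    "score \<pi> = real (card {e \<in> E. \<pi> ` e \<in> F}) / real (max (card E) (card F))" for \<pi> :: "'a \<Rightarrow> 'b"
  have "score ` {\<pi>. bij_betw \<pi> V W} \<subseteq> (\<lambda>k. real k / real (max (card E) (card F))) ` {..card E}"
  proof (rule image_subsetI)
    fix \<pi> :: "'a \<Rightarrow> 'b"
    have "card {e \<in> E. \<pi> ` e \<in> F} \<in> {..card E}" using card_mono[OF fin] by simp
    then show "score \<pi> \<in> (\<lambda>k. real k / real (max (card E) (card F))) ` {..card E}"
      unfolding score_def by (rule image_eqI[OF refl])
  qed
  then have "finite (score ` {\<pi>. bij_betw \<pi> V W})" by (rule finite_subset) simp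
  moreover have "score ` {\<pi>. bij_betw \<pi> V W} \<noteq> {}" using ex by auto
  ultimately have "Max (score ` {\<pi>. bij_betw \<pi> V W}) \<in> score ` {\<pi>. bij_betw \<pi> V W}"
    by (rule Max_in)
  then show ?thesis using less unfolding GI_def score_def[symmetric] by auto
qed

lemma card_broken_edges_le:
  assumes fin: "finite E" and "eps < 1"
    and score: "1 - eps \<le> real (card {e \<in> E. \<pi> ` e \<in> F}) / real (max (card E) (card F))"
  shows "real (card {e \<in> E. \<pi> ` e \<notin> F}) \<le> eps * real (max (card E) (card F))"
proof -
  let ?M = "real (max (card E) (card F))"
  have "?M > 0" using score \<open>eps < 1\<close> by (cases "?M = 0") auto
  then have "(1 - eps) * ?M \<le> real (card {e \<in> E. \<pi> ` e \<in> F})"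
    using score by (simp add: pos_le_divide_eq)
  moreover have "card {e \<in> E. \<pi> ` e \<in> F} + card {e \<in> E. \<pi> ` e \<notin> F} = card E"
  proof -
    have "card ({e \<in> E. \<pi> ` e \<in> F} \<union> {e \<in> E. \<pi> ` e \<notin> F})
        = card {e \<in> E. \<pi> ` e \<in> F} + card {e \<in> E. \<pi> ` e \<notin> F}"
      by (rule card_Un_disjoint) (use fin in auto)
    moreover have "{e \<in> E. \<pi> ` e \<in> F} \<union> {e \<in> E. \<pi> ` e \<notin> F} = E" by blast
    ultimately show ?thesis by simp
  qed
  moreover have "real (card E) \<le> ?M" by simp
  ultimately show ?thesis by (simp add: algebra_simps)
qed

section \<open>Counting nearly satisfiable instances\<close>

definition triples :: "nat \<Rightarrow> nat set set" where
  "triples n = {S. S \<subseteq> {..<n} \<and> card S = 3}"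

lemma finite_triples: "finite (triples n)"
  by (rule finite_subset[of _ "Pow {..<n}"]) (auto simp: triples_def)

lemma card_triples_pos: "3 \<le> n \<Longrightarrow> 0 < card (triples n)"
  using finite_triples[of n] by (subst card_gt_0_iff) (auto simp: triples_def intro!: exI[of _ "{0,1,2}"])

lemma xor_instances_lists: "xor_instances n m = {cs. set cs \<subseteq> triples n \<times> UNIV \<and> length cs = m}"
  unfolding xor_instances_def triples_def by (force simp: subset_iff)

lemma finite_xor_instances: "finite (xor_instances n m)"
  unfolding xor_instances_lists using finite_triples by (simp add: finite_lists_length_eq)

lemma card_xor_instances: "card (xor_instances n m) = (2 * card (triples n)) ^ m"
  unfolding xor_instances_lists using finite_triples
  by (simp add: card_lists_length_eq card_cartesian_product mult.commute)

lemma xor_instancesD: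
  assumes "cs \<in> xor_instances n m"
  shows "length cs = m" "well_formed cs" "\<forall>j<length cs. fst (cs ! j) \<subseteq> {..<n}"
  using assms unfolding xor_instances_def well_formed_def by (auto dest: nth_mem)

definition nearly_satisfiable :: "nat \<Rightarrow> nat \<Rightarrow> xor_instance set" where
  "nearly_satisfiable n m =
     {cs \<in> xor_instances n m. \<exists>A \<subseteq> {..<n}. 4 * card (violated A cs) \<le> m}"

lemma GI_less_if_not_nearly_satisfiable:
  assumes cs: "cs \<in> xor_instances n m" "cs \<notin> nearly_satisfiable n m"
    and eps: "0 < eps" "eps < 1" "4 * eps * real (n + 28 * m) \<le> real m"
  shows "GI (graph_V n cs) (graph_E n cs) (graph_V n (homogenize cs)) (graph_E n (homogenize cs))
    < 1 - eps"
proof (rule GI_lessI)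
  have wf: "well_formed cs" using xor_instancesD[OF cs(1)] by blast
  then show "\<exists>\<pi>. bij_betw \<pi> (graph_V n cs) (graph_V n (homogenize cs))"
    using bij_betw_homogenize_vtx by blast
  show fin: "finite (graph_E n cs)" using finite_graph_E_card_le(1)[OF wf] .
  fix \<pi> assume "bij_betw \<pi> (graph_V n cs) (graph_V n (homogenize cs))"
  then have inj: "inj_on \<pi> (graph_V n cs)" by (rule bij_betw_imp_inj_on)
  let ?E = "graph_E n cs" and ?F = "graph_E n (homogenize cs)"
  let ?A = "{x. x < n \<and> (\<exists>y. \<pi> (VarV x False) = VarV y True)}"
  show "real (card {e \<in> ?E. \<pi> ` e \<in> ?F}) / real (max (card ?E) (card ?F)) < 1 - eps"
  proof (rule ccontr)
    assume "\<not> ?thesis"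
    then have "real (card {e \<in> ?E. \<pi> ` e \<notin> ?F}) \<le> eps * real (max (card ?E) (card ?F))"
      by (intro card_broken_edges_le[OF fin eps(2)]) simp
    also have "\<dots> \<le> eps * real (n + 28 * m)"
      using finite_graph_E_card_le(2)[OF wf, of n]
        finite_graph_E_card_le(2)[OF well_formed_homogenize[OF wf], of n]
        xor_instancesD(1)[OF cs(1)] eps(1) by (intro mult_left_mono) simp_all
    finally have "4 * card (violated ?A cs) \<le> m"
      using card_violated_le_broken_edges[OF wf xor_instancesD(3)[OF cs(1)] inj] eps(3) by linarith
    moreover have "?A \<subseteq> {..<n}" by auto
    ultimately show False using cs unfolding nearly_satisfiable_def by auto
  qed
qed

text \<open>Given the variables of each equation, the set of equations violated by a fixed
  assignment determines all right-hand sides.\<close>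

lemma card_violated_eq_le:
  "card {cs \<in> xor_instances n m. violated A cs = U} \<le> card (triples n) ^ m"
proof -
  let ?I = "{cs \<in> xor_instances n m. violated A cs = U}"
  have "inj_on (map fst) ?I"
  proof (rule inj_onI)
    fix cs cs' assume cs: "cs \<in> ?I" "cs' \<in> ?I" and eq: "map fst cs = map fst cs'"
    then have len: "length cs = m" "length cs' = m" using xor_instancesD(1) by auto
    show "cs = cs'"
    proof (rule nth_equalityI)
      fix j assume j: "j < length cs"
      have fst_eq: "fst (cs ! j) = fst (cs' ! j)" using eq j len by (metis nth_map)
      have "j \<in> U \<longleftrightarrow> odd (card (fst (cs ! j) \<inter> A)) \<noteq> snd (cs ! j)"
        "j \<in> U \<longleftrightarrow> odd (card (fst (cs' ! j) \<inter> A)) \<noteq> snd (cs' ! j)"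
        using cs j len unfolding violated_def by auto
      then have "snd (cs ! j) = snd (cs' ! j)" unfolding fst_eq by blast
      with fst_eq show "cs ! j = cs' ! j" by (simp add: prod_eq_iff)
    qed (use len in simp)
  qed
  moreover have "map fst ` ?I \<subseteq> {ss. set ss \<subseteq> triples n \<and> length ss = m}"
    unfolding xor_instances_lists by (fastforce simp: subset_iff)
  ultimately have "card ?I \<le> card {ss. set ss \<subseteq> triples n \<and> length ss = m}"
    by (intro card_inj_on_le) (auto simp: finite_triples finite_lists_length_eq)
  then show ?thesis by (simp add: card_lists_length_eq finite_triples)
qed

lemma card_nearly_satisfiable_le:
  "card (nearly_satisfiable n m)
    \<le> 2 ^ n * card {U. U \<subseteq> {..<m} \<and> 4 * card U \<le> m} * card (triples n) ^ m"
proof -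
  let ?U = "{U. U \<subseteq> {..<m} \<and> 4 * card U \<le> m}"
  let ?I = "\<lambda>A U. {cs \<in> xor_instances n m. violated A cs = U}"
  have "nearly_satisfiable n m \<subseteq> (\<Union>A\<in>Pow {..<n}. \<Union>U\<in>?U. ?I A U)"
    unfolding nearly_satisfiable_def violated_def using xor_instancesD(1) by fastforce
  then have "card (nearly_satisfiable n m) \<le> card (\<Union>A\<in>Pow {..<n}. \<Union>U\<in>?U. ?I A U)"
    by (rule card_mono[rotated]) (auto intro: finite_subset[OF _ finite_xor_instances])
  also have "\<dots> \<le> (\<Sum>A\<in>Pow {..<n}. \<Sum>U\<in>?U. card (?I A U))"
    by (intro card_UN_le[THEN order_trans] sum_mono card_UN_le) auto
  also have "\<dots> \<le> (\<Sum>A\<in>Pow {..<n}. \<Sum>U\<in>?U. card (triples n) ^ m)"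
    by (intro sum_mono card_violated_eq_le)
  finally show ?thesis by (simp add: card_Pow)
qed

text \<open>Weighting each subset \<open>U\<close> by \<open>(1/4)^|U|\<close>, all subsets together weigh \<open>(5/4)^m\<close>,
  while each small subset weighs at least \<open>(1/4)^(m/4) = sqrt 2^(-m)\<close>.\<close>

lemma card_small_subsets_le:
  "real (card {U. U \<subseteq> {..<m} \<and> 4 * card U \<le> m}) \<le> (5/4 * sqrt 2) ^ m"
proof -
  let ?U = "{U. U \<subseteq> {..<m} \<and> 4 * card U \<le> m}"
  have weight: "1 \<le> sqrt 2 ^ m * (1/4) ^ card U" if "U \<in> ?U" for U
  proof -
    have "sqrt (2::real) ^ 4 = 4" by (simp add: power4_eq_xxxx)
    then have "(4::real) ^ card U = sqrt 2 ^ (4 * card U)" by (simp add: power_mult)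
    also have "\<dots> \<le> sqrt 2 ^ m" using that by (intro power_increasing) auto
    finally show ?thesis by (simp add: power_one_over field_simps)
  qed
  have "(\<Prod>x<m. (1::real)/4 + 1) = (\<Sum>U\<in>Pow {..<m}. (\<Prod>x\<in>U. 1/4) * (\<Prod>x\<in>{..<m} - U. 1))"
    by (rule prod_add) simp
  then have total: "(\<Sum>U\<in>Pow {..<m}. ((1::real)/4) ^ card U) = (5/4) ^ m" by simp
  have "real (card ?U) = (\<Sum>U\<in>?U. 1)" by simp
  also have "\<dots> \<le> (\<Sum>U\<in>?U. sqrt 2 ^ m * (1/4) ^ card U)"
    by (rule sum_mono) (rule weight)
  also have "\<dots> \<le> (\<Sum>U\<in>Pow {..<m}. sqrt 2 ^ m * (1/4) ^ card U)"
    by (rule sum_mono2) auto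
  also have "\<dots> = sqrt 2 ^ m * (5/4) ^ m"
    by (simp only: sum_distrib_left[symmetric] total)
  also have "\<dots> = (5/4 * sqrt 2) ^ m"
    by (simp only: power_mult_distrib mult.commute)
  finally show ?thesis .
qed

lemma nearly_satisfiable_fraction_le:
  assumes "3 \<le> n" "8 * n \<le> m"
  shows "real (card (nearly_satisfiable n m)) / real (card (xor_instances n m))
    \<le> (2 * (25/32) ^ 4) ^ n"
proof -
  define T where "T = real (card (triples n))"
  define r :: real where "r = 5/8 * sqrt 2"
  have "T > 0" using card_triples_pos[OF assms(1)] unfolding T_def by simp
  have "sqrt (2::real) \<le> 8/5" by (rule real_le_lsqrt) (simp_all add: power2_eq_square)
  then have r: "0 \<le> r" "r \<le> 1" unfolding r_def by auto
  have r2: "r ^ 2 = 25/32" unfolding r_def by (simp add: power_mult_distrib power_divide)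
  have "real (card (nearly_satisfiable n m))
      \<le> 2 ^ n * real (card {U. U \<subseteq> {..<m} \<and> 4 * card U \<le> m}) * T ^ m"
    unfolding T_def using of_nat_mono[OF card_nearly_satisfiable_le[of n m], where 'a = real] by simp
  also have "\<dots> \<le> 2 ^ n * (5/4 * sqrt 2) ^ m * T ^ m"
    using \<open>T > 0\<close> card_small_subsets_le by (intro mult_right_mono mult_left_mono) simp_all
  also have "\<dots> = 2 ^ n * r ^ m * (2 * T) ^ m"
  proof -
    have "5/4 * sqrt 2 * T = r * (2 * T)" unfolding r_def by simp
    then show ?thesis by (simp only: mult.assoc power_mult_distrib[symmetric])
  qed
  finally have "real (card (nearly_satisfiable n m)) / (2 * T) ^ m \<le> 2 ^ n * r ^ m"
    using \<open>T > 0\<close> by (simp add: divide_le_eq mult.assoc)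
  also have "\<dots> \<le> 2 ^ n * r ^ (8 * n)"
    using r assms(2) by (intro mult_left_mono power_decreasing) auto
  also have "\<dots> = (2 * (r ^ 2) ^ 4) ^ n"
    by (simp add: power_mult power_mult_distrib)
  finally show ?thesis unfolding r2 card_xor_instances T_def by simp
qed

lemma prob_GI_less_ge:
  assumes "3 \<le> n" "8 * n \<le> m" "0 < eps" "116 * eps \<le> 1"
  shows "1 - (2 * (25/32) ^ 4) ^ n \<le> measure_pmf.prob (random_3xor n m)
    {cs. GI (graph_V n cs) (graph_E n cs) (graph_V n (homogenize cs)) (graph_E n (homogenize cs))
      < 1 - eps}"
proof -
  let ?X = "xor_instances n m" and ?N = "nearly_satisfiable n m"
  let ?Good = "{cs. GI (graph_V n cs) (graph_E n cs) (graph_V n (homogenize cs))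
    (graph_E n (homogenize cs)) < 1 - eps}"
  have X_pos: "0 < card ?X"
    using card_triples_pos[OF assms(1)] unfolding card_xor_instances by simp
  then have X: "finite ?X" "?X \<noteq> {}" using card_gt_0_iff by blast+
  have "4 * eps * real (n + 28 * m) \<le> 4 * eps * (29 * real m)"
    using assms(2,3) by (intro mult_left_mono) auto
  also have "\<dots> \<le> real m" using mult_right_mono[OF assms(4), of "real m"] by simp
  finally have "?X - ?N \<subseteq> ?X \<inter> ?Good"
    using GI_less_if_not_nearly_satisfiable assms(3,4) by auto
  then have "real (card ?X) - real (card ?N) \<le> real (card (?X \<inter> ?Good))"
    using card_mono[OF _ \<open>?X - ?N \<subseteq> ?X \<inter> ?Good\<close>] card_Diff_subset[of ?N ?X] X(1)
    unfolding nearly_satisfiable_def by (simp add: diff_card_le_card_Diff)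
  then have "(real (card ?X) - real (card ?N)) / real (card ?X)
      \<le> real (card (?X \<inter> ?Good)) / real (card ?X)"
    by (rule divide_right_mono) simp
  moreover have "(real (card ?X) - real (card ?N)) / real (card ?X) = 1 - real (card ?N) / real (card ?X)"
    using X_pos by (simp add: diff_divide_distrib)
  moreover have "measure_pmf.prob (random_3xor n m) ?Good = real (card (?X \<inter> ?Good)) / real (card ?X)"
    unfolding random_3xor_def using measure_pmf_of_set[OF X(2,1)] by (simp add: Int_commute)
  ultimately show ?thesis using nearly_satisfiable_fraction_le[OF assms(1,2)] by linarith
qed

theorem lemma5p1:
  fixes c :: real
  assumes "c \<ge> 10 ^ 10"
  shows "(\<lambda>n. measure_pmf.prob (random_3xor n (nat \<lfloor>c * real n\<rfloor>))
           {cs. GI (graph_V n cs) (graph_E n cs)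
                   (graph_V n (homogenize cs)) (graph_E n (homogenize cs))
                 < 1 - 1 / (95 * c ^ 2)})
         \<longlonglongrightarrow> 1"
proof -
  let ?q = "2 * (25/32) ^ 4 :: real"
  define p where "p n = measure_pmf.prob (random_3xor n (nat \<lfloor>c * real n\<rfloor>))
    {cs. GI (graph_V n cs) (graph_E n cs) (graph_V n (homogenize cs)) (graph_E n (homogenize cs))
      < 1 - 1 / (95 * c ^ 2)}" for n
  have c: "8 \<le> c" "8 * 8 \<le> c ^ 2"
    using assms power_mono[of 8 c 2] by (auto simp: power2_eq_square)
  have eps: "0 < 1 / (95 * c ^ 2)" "116 * (1 / (95 * c ^ 2)) \<le> 1"
    using c by (auto simp: field_simps)
  have m: "8 * n \<le> nat \<lfloor>c * real n\<rfloor>" for n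
    using mult_right_mono[OF c(1), of "real n"] by (simp add: le_nat_floor)
  have lower: "\<forall>\<^sub>F n in sequentially. 1 - ?q ^ n \<le> p n"
    unfolding p_def by (rule eventually_sequentiallyI[of 3]) (rule prob_GI_less_ge[OF _ m eps])
  have upper: "\<forall>\<^sub>F n in sequentially. p n \<le> 1"
    unfolding p_def by (simp add: measure_pmf.prob_le_1)
  have "(\<lambda>n. 1 - ?q ^ n) \<longlonglongrightarrow> 1"
    using tendsto_diff[OF tendsto_const LIMSEQ_power_zero[of ?q]] by (simp add: power_divide)
  from tendsto_sandwich[OF lower upper this tendsto_const] show ?thesis unfolding p_def .
qed

end
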